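(* Let $n>2$ be an integer, $A$ an abelian group (written additively) of order $n$, and $\alpha\in A$ an element of order greater than $2$. Let $G=\{1,u,v,w\}$ be the Klein four-group with neutral element $1$. Define $\mu:G\times G\to A$ by $\mu(x,y)=\alpha$ if $(x,y)\in\{(v,w),(w,u),(w,w)\}$, $\mu(v,u)=-\alpha$, and $\mu(x,y)=0$ otherwise. Then $(G,A,\mu)$ is a non-flexible (hence nonassociative), noncommutative C-loop whose nucleus is $N=\{(1,a): a\in A\}$.
   Context: For a group $G$ and abelian group $A$, a factor set is a map $\mu:G\times G\to A$ with $\mu(1,g)=\mu(g,1)=0$; $(G,A,\mu)$ denotes $G\times A$ with multiplication $(g,a)(h,b)=(gh,\,a+b+\mu(g,h))$. A C-loop is a loop satisfying $x(y(yz))=((xy)y)z$. A loop is flexible if $(xy)x=x(yx)$ for all $x,y$. The nucleus is the set of elements $a$ with $a(yz)=(ay)z$, $y(az)=(ya)z$, $y(za)=(yz)a$ for all $y,z$. *)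

theory Defs
  imports Main
begin

definition add_order :: "'a::ab_group_add \<Rightarrow> nat" where
  "add_order a = (if \<exists>k>0. ((+) a ^^ k) 0 = 0 then (LEAST k. 0 < k \<and> ((+) a ^^ k) 0 = 0) else 0)"

datatype K4 = K1 | Ku | Kv | Kw

fun k4_mult :: "K4 \<Rightarrow> K4 \<Rightarrow> K4" where
  "k4_mult K1 y = y"
| "k4_mult x K1 = x"
| "k4_mult Ku Ku = K1" | "k4_mult Kv Kv = K1" | "k4_mult Kw Kw = K1"
| "k4_mult Ku Kv = Kw" | "k4_mult Kv Ku = Kw"
| "k4_mult Ku Kw = Kv" | "k4_mult Kw Ku = Kv"
| "k4_mult Kv Kw = Ku" | "k4_mult Kw Kv = Ku"

definition factor_set :: "'g \<Rightarrow> ('g \<Rightarrow> 'g \<Rightarrow> 'a::ab_group_add) \<Rightarrow> bool" where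
  "factor_set e \<mu> \<longleftrightarrow> (\<forall>g. \<mu> e g = 0 \<and> \<mu> g e = 0)"

definition ext_mult :: "('g \<Rightarrow> 'g \<Rightarrow> 'g) \<Rightarrow> ('g \<Rightarrow> 'g \<Rightarrow> 'a::ab_group_add)
    \<Rightarrow> 'g \<times> 'a \<Rightarrow> 'g \<times> 'a \<Rightarrow> 'g \<times> 'a" where
  "ext_mult m \<mu> x y = (m (fst x) (fst y), snd x + snd y + \<mu> (fst x) (fst y))"

definition is_loop :: "('l \<Rightarrow> 'l \<Rightarrow> 'l) \<Rightarrow> bool" where
  "is_loop m \<longleftrightarrow> (\<exists>e. \<forall>x. m e x = x \<and> m x e = x)
     \<and> (\<forall>a b. \<exists>!x. m a x = b) \<and> (\<forall>a b. \<exists>!y. m y a = b)"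

definition c_loop :: "('l \<Rightarrow> 'l \<Rightarrow> 'l) \<Rightarrow> bool" where
  "c_loop m \<longleftrightarrow> is_loop m \<and> (\<forall>x y z. m x (m y (m y z)) = m (m (m x y) y) z)"

definition flexible :: "('l \<Rightarrow> 'l \<Rightarrow> 'l) \<Rightarrow> bool" where
  "flexible m \<longleftrightarrow> (\<forall>x y. m (m x y) x = m x (m y x))"

definition associative_op :: "('l \<Rightarrow> 'l \<Rightarrow> 'l) \<Rightarrow> bool" where
  "associative_op m \<longleftrightarrow> (\<forall>x y z. m x (m y z) = m (m x y) z)"

definition commutative_op :: "('l \<Rightarrow> 'l \<Rightarrow> 'l) \<Rightarrow> bool" where
  "commutative_op m \<longleftrightarrow> (\<forall>x y. m x y = m y x)"

definition nucleus :: "('l \<Rightarrow> 'l \<Rightarrow> 'l) \<Rightarrow> 'l set" where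
  "nucleus m = {a. \<forall>y z. m a (m y z) = m (m a y) z \<and> m y (m a z) = m (m y a) z
                        \<and> m y (m z a) = m (m y z) a}"

end

theory Submission
  imports Defs
begin

text \<open>Since the Klein group \<open>G\<close> is an elementary abelian 2-group, the C-identity in
  \<open>(G,A,\<mu>)\<close> reduces to the condition that \<open>\<mu>(y,z) + \<mu>(y,yz) = \<mu>(x,y) + \<mu>(xy,y)\<close>
  for all \<open>x, y, z\<close>, which the given \<open>\<mu>\<close> satisfies (both sides equal \<open>\<mu>(y,y)\<close>).
  Flexibility, commutativity and the nucleus are each tested on elements \<open>(g,0)\<close>: comparing
  second coordinates turns each law into an identity between values of \<open>\<mu>\<close>, and for
  \<open>g \<noteq> 1\<close> the identities that fail reduce to \<open>2\<alpha> = 0\<close> or \<open>\<alpha> = 0\<close>, both excluded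
  because \<alpha> has order greater than 2.\<close>

lemma add_order_le:
  assumes "0 < k" and "((+) a ^^ k) 0 = 0"
  shows "add_order a \<le> k"
  using assms unfolding add_order_def by (auto intro: Least_le)

lemma add_order_gt_two_imp_double_nonzero:
  fixes a :: "'a::ab_group_add"
  assumes "add_order a > 2"
  shows "a + a \<noteq> 0"
  using assms add_order_le[of 2 a] by (auto simp: numeral_2_eq_2)

lemma associative_op_imp_flexible: "associative_op m \<Longrightarrow> flexible m"
  unfolding associative_op_def flexible_def by metis

lemma ext_mult_eq_iff:
  "ext_mult m \<mu> x y = z \<longleftrightarrow> m (fst x) (fst y) = fst z \<and> snd x + snd y + \<mu> (fst x) (fst y) = snd z"
  unfolding ext_mult_def by auto

lemma is_loop_ext_mult:
  assumes loop: "is_loop m"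
    and unit: "\<And>x. m e x = x" "\<And>x. m x e = x"
    and fs: "factor_set e \<mu>"
  shows "is_loop (ext_mult m \<mu>)"
  unfolding is_loop_def
proof (intro conjI allI)
  show "\<exists>u. \<forall>x. ext_mult m \<mu> u x = x \<and> ext_mult m \<mu> x u = x"
    using fs by (intro exI[of _ "(e, 0)"]) (simp add: ext_mult_def unit factor_set_def)
next
  fix a b :: "'a \<times> 'b"
  obtain g where g: "m (fst a) g = fst b" and g_unique: "\<And>g'. m (fst a) g' = fst b \<Longrightarrow> g' = g"
    using loop unfolding is_loop_def by metis
  show "\<exists>!x. ext_mult m \<mu> a x = b"
  proof
    show "ext_mult m \<mu> a (g, snd b - snd a - \<mu> (fst a) g) = b"
      using g by (simp add: ext_mult_eq_iff)
  next
    fix x assume "ext_mult m \<mu> a x = b"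
    then show "x = (g, snd b - snd a - \<mu> (fst a) g)"
      unfolding ext_mult_eq_iff using g_unique by (auto simp: prod_eq_iff algebra_simps)
  qed
next
  fix a b :: "'a \<times> 'b"
  obtain g where g: "m g (fst a) = fst b" and g_unique: "\<And>g'. m g' (fst a) = fst b \<Longrightarrow> g' = g"
    using loop unfolding is_loop_def by metis
  show "\<exists>!y. ext_mult m \<mu> y a = b"
  proof
    show "ext_mult m \<mu> (g, snd b - snd a - \<mu> g (fst a)) a = b"
      using g by (simp add: ext_mult_eq_iff)
  next
    fix y assume "ext_mult m \<mu> y a = b"
    then show "y = (g, snd b - snd a - \<mu> g (fst a))"
      unfolding ext_mult_eq_iff using g_unique by (auto simp: prod_eq_iff algebra_simps)
  qed
qed

lemma ext_mult_C_identity: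
  assumes cancel_left: "\<And>g h. m g (m g h) = h"
    and cancel_right: "\<And>g h. m (m h g) g = h"
    and C_cocycle: "\<And>g h k. \<mu> h k + \<mu> h (m h k) = \<mu> g h + \<mu> (m g h) h"
  shows "ext_mult m \<mu> x (ext_mult m \<mu> y (ext_mult m \<mu> y z))
       = ext_mult m \<mu> (ext_mult m \<mu> (ext_mult m \<mu> x y) y) z"
  using C_cocycle[where g = "fst x" and h = "fst y" and k = "fst z"]
  by (simp add: ext_mult_def cancel_left cancel_right algebra_simps)

lemma ext_mult_unit_in_nucleus:
  assumes "associative_op m" and unit: "\<And>x. m e x = x" "\<And>x. m x e = x"
    and "factor_set e \<mu>"
  shows "(e, a) \<in> nucleus (ext_mult m \<mu>)"
  using assms unfolding nucleus_def associative_op_def factor_set_def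
  by (simp add: ext_mult_def algebra_simps)

lemma nucleus_ext_mult_imp_cocycle:
  assumes "associative_op m" and "(g, a) \<in> nucleus (ext_mult m \<mu>)"
  shows "\<mu> g (m y z) + \<mu> y z = \<mu> g y + \<mu> (m g y) z"
proof -
  have "ext_mult m \<mu> (g, a) (ext_mult m \<mu> (y, 0) (z, 0))
      = ext_mult m \<mu> (ext_mult m \<mu> (g, a) (y, 0)) (z, 0)"
    using assms(2) unfolding nucleus_def by blast
  then show ?thesis by (simp add: ext_mult_def algebra_simps)
qed

lemma flexible_ext_mult_imp_cocycle:
  assumes "flexible (ext_mult m \<mu>)"
  shows "\<mu> x y + \<mu> (m x y) x = \<mu> y x + \<mu> x (m y x)"
proof -
  have "ext_mult m \<mu> (ext_mult m \<mu> (x, 0) (y, 0)) (x, 0)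
      = ext_mult m \<mu> (x, 0) (ext_mult m \<mu> (y, 0) (x, 0))"
    using assms unfolding flexible_def by blast
  then show ?thesis by (simp add: ext_mult_def algebra_simps)
qed

lemma commutative_ext_mult_imp_symmetric:
  assumes "commutative_op (ext_mult m \<mu>)"
  shows "\<mu> x y = \<mu> y x"
proof -
  have "ext_mult m \<mu> (x, 0) (y, 0) = ext_mult m \<mu> (y, 0) (x, 0)"
    using assms unfolding commutative_op_def by blast
  then show ?thesis by (simp add: ext_mult_def)
qed

lemma k4_mult_K1_right [simp]: "k4_mult x K1 = x"
  by (cases x) auto

lemma k4_mult_cancel_left: "k4_mult x (k4_mult x y) = y"
  by (cases x; cases y) auto

lemma k4_mult_cancel_right: "k4_mult (k4_mult y x) x = y"
  by (cases x; cases y) auto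

lemma k4_mult_assoc: "k4_mult x (k4_mult y z) = k4_mult (k4_mult x y) z"
  by (cases x; cases y; cases z) auto

lemma associative_op_k4_mult: "associative_op k4_mult"
  unfolding associative_op_def using k4_mult_assoc by blast

lemma is_loop_k4_mult: "is_loop k4_mult"
  unfolding is_loop_def
  by (metis k4_mult.simps(1) k4_mult_K1_right k4_mult_cancel_left k4_mult_cancel_right)

definition k4_cocycle :: "'a::ab_group_add \<Rightarrow> K4 \<Rightarrow> K4 \<Rightarrow> 'a" where
  "k4_cocycle \<alpha> x y = (if (x, y) \<in> {(Kv, Kw), (Kw, Ku), (Kw, Kw)} then \<alpha>
                       else if (x, y) = (Kv, Ku) then - \<alpha> else 0)"

lemma factor_set_k4_cocycle: "factor_set K1 (k4_cocycle \<alpha>)"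
  unfolding factor_set_def k4_cocycle_def by auto

lemma k4_cocycle_C_condition:
  "k4_cocycle \<alpha> y z + k4_cocycle \<alpha> y (k4_mult y z)
     = k4_cocycle \<alpha> x y + k4_cocycle \<alpha> (k4_mult x y) y"
  unfolding k4_cocycle_def by (cases x; cases y; cases z) simp_all

lemma c_loop_k4_ext: "c_loop (ext_mult k4_mult (k4_cocycle \<alpha>))"
  unfolding c_loop_def
proof (intro conjI allI)
  show "is_loop (ext_mult k4_mult (k4_cocycle \<alpha>))"
    using is_loop_k4_mult _ _ factor_set_k4_cocycle by (rule is_loop_ext_mult) simp_all
  show "ext_mult k4_mult (k4_cocycle \<alpha>) x
          (ext_mult k4_mult (k4_cocycle \<alpha>) y (ext_mult k4_mult (k4_cocycle \<alpha>) y z))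
      = ext_mult k4_mult (k4_cocycle \<alpha>)
          (ext_mult k4_mult (k4_cocycle \<alpha>) (ext_mult k4_mult (k4_cocycle \<alpha>) x y) y) z"
    for x y z
    using k4_mult_cancel_left k4_mult_cancel_right k4_cocycle_C_condition
    by (rule ext_mult_C_identity)
qed

lemma k4_ext_not_flexible:
  assumes "\<alpha> + \<alpha> \<noteq> 0"
  shows "\<not> flexible (ext_mult k4_mult (k4_cocycle \<alpha>))"
proof
  assume "flexible (ext_mult k4_mult (k4_cocycle \<alpha>))"
  from flexible_ext_mult_imp_cocycle[OF this, of Kv Ku] have "- \<alpha> = \<alpha>"
    by (simp add: k4_cocycle_def)
  with assms show False by (metis add.right_inverse)
qed

lemma k4_ext_not_commutative:
  assumes "\<alpha> \<noteq> 0"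
  shows "\<not> commutative_op (ext_mult k4_mult (k4_cocycle \<alpha>))"
  using assms commutative_ext_mult_imp_symmetric[of k4_mult "k4_cocycle \<alpha>" Kv Ku]
  by (auto simp: k4_cocycle_def)

lemma nucleus_k4_ext:
  assumes "\<alpha> + \<alpha> \<noteq> 0"
  shows "nucleus (ext_mult k4_mult (k4_cocycle \<alpha>)) = {(K1, a) | a. True}"
proof (intro equalityI subsetI)
  fix x assume x: "x \<in> nucleus (ext_mult k4_mult (k4_cocycle \<alpha>))"
  obtain g a where x_eq: "x = (g, a)" by (cases x)
  note cocycle = nucleus_ext_mult_imp_cocycle[OF associative_op_k4_mult x[unfolded x_eq]]
  have "- \<alpha> \<noteq> \<alpha>" using assms by (metis add.right_inverse)
  have "g = K1"
  proof (cases g)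
    case Ku
    then show ?thesis using cocycle[of Kv Ku] \<open>- \<alpha> \<noteq> \<alpha>\<close> by (auto simp: k4_cocycle_def)
  next
    case Kv
    then show ?thesis using cocycle[of Ku Kv] \<open>- \<alpha> \<noteq> \<alpha>\<close> by (auto simp: k4_cocycle_def)
  next
    case Kw
    then show ?thesis using cocycle[of Ku Kw] assms by (auto simp: k4_cocycle_def)
  qed simp
  then show "x \<in> {(K1, a) | a. True}" using x_eq by simp
next
  fix x assume "x \<in> {(K1, a) | a :: 'a. True}"
  then show "x \<in> nucleus (ext_mult k4_mult (k4_cocycle \<alpha>))"
    using ext_mult_unit_in_nucleus[OF associative_op_k4_mult _ _ factor_set_k4_cocycle] by auto
qed

theorem proposition3p3:
  fixes n :: nat and \<alpha> :: "'a::{ab_group_add, finite}" and \<mu> :: "K4 \<Rightarrow> K4 \<Rightarrow> 'a"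
  assumes "n > 2"
    and "card (UNIV :: 'a set) = n"
    and "add_order \<alpha> > 2"
    and "\<And>x y. \<mu> x y = (if (x, y) \<in> {(Kv, Kw), (Kw, Ku), (Kw, Kw)} then \<alpha>
                         else if (x, y) = (Kv, Ku) then - \<alpha> else 0)"
  shows "factor_set K1 \<mu>
    \<and> c_loop (ext_mult k4_mult \<mu>)
    \<and> \<not> flexible (ext_mult k4_mult \<mu>)
    \<and> \<not> associative_op (ext_mult k4_mult \<mu>)
    \<and> \<not> commutative_op (ext_mult k4_mult \<mu>)
    \<and> nucleus (ext_mult k4_mult \<mu>) = {(K1, a) | a. True}"
proof -
  have \<mu>_eq: "\<mu> = k4_cocycle \<alpha>"
    by (intro ext) (simp add: assms(4) k4_cocycle_def)
  have double: "\<alpha> + \<alpha> \<noteq> 0"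
    using assms(3) by (rule add_order_gt_two_imp_double_nonzero)
  then have "\<alpha> \<noteq> 0" by auto
  have not_flexible: "\<not> flexible (ext_mult k4_mult \<mu>)"
    unfolding \<mu>_eq using double by (rule k4_ext_not_flexible)
  then have "\<not> associative_op (ext_mult k4_mult \<mu>)"
    using associative_op_imp_flexible by blast
  with not_flexible show ?thesis
    unfolding \<mu>_eq
    using factor_set_k4_cocycle c_loop_k4_ext k4_ext_not_commutative[OF \<open>\<alpha> \<noteq> 0\<close>]
      nucleus_k4_ext[OF double]
    by blast
qed

end
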